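(* Assume $|F|>2$. Then $E$ has an asymptotic sequence, i.e. there is a sequence $(A_n)_{n\in\omega}$ of pairwise disjoint asymptotic subsets of $E\setminus\{0\}$.
   Context: $F$ is a countable field and $E$ is a countably infinite-dimensional $F$-vector space. A set $A\subseteq E\setminus\{0\}$ is asymptotic if $V\cap A\neq\emptyset$ for every infinite-dimensional subspace $V$ of $E$. *)

theory Defs
  imports Complex_Main "HOL-Library.Countable_Set"
begin

text \<open>Vector spaces are given by the library locale vector_space with a scalar
  multiplication scale :: 'a::field => 'v => 'v; the ambient space E is the whole type 'v.\<close>

definition inf_dim_subspace :: "('a::field \<Rightarrow> 'v::ab_group_add \<Rightarrow> 'v) \<Rightarrow> 'v set \<Rightarrow> bool" where
  "inf_dim_subspace scale V \<longleftrightarrow> module.subspace scale V \<and>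
     (\<exists>B. B \<subseteq> V \<and> \<not> module.dependent scale B \<and> module.span scale B = V \<and> infinite B)"

definition asymptotic :: "('a::field \<Rightarrow> 'v::ab_group_add \<Rightarrow> 'v) \<Rightarrow> 'v set \<Rightarrow> bool" where
  "asymptotic scale A \<longleftrightarrow> A \<subseteq> UNIV - {0} \<and>
     (\<forall>V. inf_dim_subspace scale V \<longrightarrow> V \<inter> A \<noteq> {})"

end

theory Submission
  imports Defs "HOL-Computational_Algebra.Primes"
begin

text \<open>Fix a basis \<open>e\<^sub>0, e\<^sub>1, \<dots>\<close> of \<open>E\<close> and read a nonzero vector as the word of its nonzero
  coordinates, in the order of the basis. Let \<open>ch(v)\<close> count the positions where two consecutive
  letters of this word differ, and put \<open>v\<close> into \<open>A\<^sub>n\<close> iff \<open>2\<^sup>n\<close> exactly divides \<open>ch(v) + 1\<close>;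
  the \<open>A\<^sub>n\<close> are disjoint. An infinite-dimensional subspace \<open>V\<close> contains nonzero vectors supported
  beyond any given index. If \<open>u, w \<in> V\<close> have supports \<open>supp u < supp w\<close>, then for a suitable
  scalar \<open>c \<noteq> 0\<close> the word of \<open>u + c w\<close> is the word of \<open>u\<close> followed by \<open>c\<close> times the word of \<open>w\<close>,
  and \<open>c\<close> decides whether the junction adds a change or not; as \<open>|F| > 2\<close>, both options are
  available. Gluing in this way realises, inside \<open>V\<close>, every value of \<open>ch\<close> in arbitrarily long
  intervals, and every interval of length \<open>4 \<cdot> 2\<^sup>n\<close> contains some \<open>k\<close> with \<open>2\<^sup>n\<close> exactly
  dividing \<open>k + 1\<close>.\<close>

fun changes :: "'a list \<Rightarrow> nat" where
  "changes (x # y # xs) = of_bool (x \<noteq> y) + changes (y # xs)"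
| "changes _ = 0"

lemma changes_append:
  "xs \<noteq> [] \<Longrightarrow> ys \<noteq> [] \<Longrightarrow>
   changes (xs @ ys) = changes xs + changes ys + of_bool (last xs \<noteq> hd ys)"
  by (induction xs rule: changes.induct) (auto simp: neq_Nil_conv)

lemma changes_map_inj: "inj f \<Longrightarrow> changes (map f xs) = changes xs"
  by (induction xs rule: changes.induct) (auto simp: inj_eq)

lemma ex_multiplicity_two_in_interval:
  "\<exists>k \<in> {I..I + 4 * 2^n}. multiplicity (2::nat) (Suc k) = n"
proof -
  define t :: nat where "t = 2^n"
  define a where "a = Suc I div (2 * t)"
  have "t > 0" by (simp add: t_def)
  then have "Suc I mod (2 * t) < 2 * t" by simp
  moreover have "Suc I = 2 * t * a + Suc I mod (2 * t)" by (simp add: a_def)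
  ultimately have interval: "t * (2 * Suc a + 1) - 1 \<in> {I..I + 4 * t}" by auto
  have "multiplicity 2 ((2 * Suc a + 1) * t) = multiplicity 2 t"
    by (rule multiplicity_prime_elem_times_other) auto
  then have "multiplicity 2 (t * (2 * Suc a + 1)) = n"
    by (simp add: t_def mult.commute)
  with interval \<open>t > 0\<close> show ?thesis
    by (intro bexI[of _ "t * (2 * Suc a + 1) - 1"]) (auto simp: t_def)
qed

lemma sorted_list_of_set_Un_less:
  fixes A B :: "'a::linorder set"
  assumes "finite A" "finite B" "\<And>a b. a \<in> A \<Longrightarrow> b \<in> B \<Longrightarrow> a < b"
  shows "sorted_list_of_set (A \<union> B) = sorted_list_of_set A @ sorted_list_of_set B"
proof -
  have "A \<inter> B = {}" using assms(3) by fastforce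
  then have "sorted_wrt (<) (sorted_list_of_set A @ sorted_list_of_set B) \<and>
      set (sorted_list_of_set A @ sorted_list_of_set B) = A \<union> B \<and>
      length (sorted_list_of_set A @ sorted_list_of_set B) = card (A \<union> B)"
    using assms by (auto simp: sorted_wrt_append card_Un_disjoint)
  then show ?thesis
    using sorted_list_of_set_unique assms(1,2) by (metis finite_Un)
qed

lemma ex_not_in_doubleton:
  assumes "infinite (UNIV :: 'a set) \<or> 2 < card (UNIV :: 'a set)"
  shows "\<exists>c :: 'a. c \<noteq> a \<and> c \<noteq> b"
proof (rule ccontr)
  assume "\<not> ?thesis"
  then have "UNIV = {a, b}" by blast
  moreover have "card {a, b} \<le> 2" by (simp add: card_insert_if)
  ultimately show False using assms by (metis finite.emptyI finite.insertI not_less)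
qed

context vector_space
begin

lemma kernel_not_finitely_spanned:
  assumes "subspace W" and W_big: "\<And>T. finite T \<Longrightarrow> \<not> W \<subseteq> span T"
    and f_add: "\<And>x y. f (x + y) = f x + f y" and f_scale: "\<And>c x. f (c *s x) = c * f x"
    and "finite T"
  shows "\<not> {w \<in> W. f w = 0} \<subseteq> span T"
proof
  assume ker_sub: "{w \<in> W. f w = 0} \<subseteq> span T"
  then obtain w0 where w0: "w0 \<in> W" "f w0 \<noteq> 0"
    using W_big[OF \<open>finite T\<close>] by blast
  have "W \<subseteq> span (insert w0 T)"
  proof
    fix w assume "w \<in> W"
    define k where "k = f w / f w0"
    have f_diff: "f (x - y) = f x - f y" for x y
      using f_add[of "x - y" y] by simp
    have "w - k *s w0 \<in> W"
      using \<open>subspace W\<close> \<open>w \<in> W\<close> w0(1) by (simp add: subspace_diff subspace_scale)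
    moreover have "f (w - k *s w0) = 0"
      using w0(2) by (simp add: f_diff f_scale k_def)
    ultimately have "w - k *s w0 \<in> span (insert w0 T)"
      using ker_sub span_mono[OF subset_insertI] by blast
    moreover have "k *s w0 \<in> span (insert w0 T)"
      by (simp add: span_base span_scale)
    ultimately have "(w - k *s w0) + k *s w0 \<in> span (insert w0 T)"
      by (rule span_add)
    then show "w \<in> span (insert w0 T)" by simp
  qed
  then show False using W_big \<open>finite T\<close> by blast
qed

end

locale enumerated_basis = vector_space scale
  for scale :: "'a::field \<Rightarrow> 'v::ab_group_add \<Rightarrow> 'v" (infixr \<open>*s\<close> 75) +
  fixes e :: "nat \<Rightarrow> 'v"
  assumes independent_basis: "independent (range e)"
    and span_basis: "span (range e) = UNIV"
    and inj_basis: "inj e"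
begin

definition coeff :: "'v \<Rightarrow> nat \<Rightarrow> 'a" where
  "coeff v i = representation (range e) v (e i)"

definition support :: "'v \<Rightarrow> nat set" where
  "support v = {i. coeff v i \<noteq> 0}"

definition nz_coeffs :: "'v \<Rightarrow> 'a list" where
  "nz_coeffs v = map (coeff v) (sorted_list_of_set (support v))"

lemma coeff_add: "coeff (u + w) i = coeff u i + coeff w i"
  using representation_add[OF independent_basis, of w u] span_basis by (simp add: coeff_def)

lemma coeff_scale: "coeff (c *s u) i = c * coeff u i"
  using representation_scale[OF independent_basis, of u c] span_basis by (simp add: coeff_def)

lemma coeff_zero: "coeff 0 i = 0"
  by (simp add: coeff_def representation_zero)

lemma finite_support: "finite (support v)"
proof -
  have "support v = e -` {b. representation (range e) v b \<noteq> 0}"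
    by (auto simp: support_def coeff_def)
  then show ?thesis
    using finite_vimageI[OF finite_representation inj_basis] by simp
qed

lemma support_eq_empty_iff: "support v = {} \<longleftrightarrow> v = 0"
proof
  assume "support v = {}"
  then have "representation (range e) v = (\<lambda>b. 0)"
    using representation_ne_zero by (fastforce simp: support_def coeff_def)
  then show "v = 0"
    using sum_nonzero_representation_eq[OF independent_basis, of v] span_basis by simp
qed (simp add: support_def coeff_zero)

lemma nz_coeffs_eq_Nil_iff: "nz_coeffs v = [] \<longleftrightarrow> v = 0"
  using finite_support[of v] by (simp add: nz_coeffs_def support_eq_empty_iff)

lemma nz_coeffs_nonzero: "x \<in> set (nz_coeffs v) \<Longrightarrow> x \<noteq> 0"
  using finite_support[of v] by (auto simp: nz_coeffs_def support_def)

lemma support_add_scale: "support (u + c *s w) \<subseteq> support u \<union> support w"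
  by (auto simp: support_def coeff_add coeff_scale)

lemma nz_coeffs_add_scale:
  assumes "support u \<subseteq> {..<M}" "support w \<subseteq> {M..}" "c \<noteq> 0"
  shows "nz_coeffs (u + c *s w) = nz_coeffs u @ map ((*) c) (nz_coeffs w)"
proof -
  have disjoint: "coeff u i = 0 \<or> coeff w i = 0" for i
    using assms(1,2) by (force simp: support_def)
  have "i \<in> support (u + c *s w) \<longleftrightarrow> i \<in> support u \<union> support w" for i
    using disjoint[of i] \<open>c \<noteq> 0\<close> by (auto simp: support_def coeff_add coeff_scale)
  then have "support (u + c *s w) = support u \<union> support w" by blast
  moreover have "sorted_list_of_set (support u \<union> support w) =
      sorted_list_of_set (support u) @ sorted_list_of_set (support w)"
    using assms(1,2) by (intro sorted_list_of_set_Un_less finite_support) force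
  ultimately show ?thesis
    using disjoint finite_support[of u] finite_support[of w]
    by (auto simp: nz_coeffs_def coeff_add coeff_scale support_def)
qed

lemma changes_nz_coeffs_add_scale:
  assumes "support u \<subseteq> {..<M}" "support w \<subseteq> {M..}" "c \<noteq> 0" "u \<noteq> 0" "w \<noteq> 0"
  shows "changes (nz_coeffs (u + c *s w)) = changes (nz_coeffs u) + changes (nz_coeffs w) +
           of_bool (last (nz_coeffs u) \<noteq> c * hd (nz_coeffs w))"
proof -
  have "inj ((*) c)" using \<open>c \<noteq> 0\<close> by (auto intro: injI)
  then show ?thesis
    using assms nz_coeffs_eq_Nil_iff
    by (simp add: nz_coeffs_add_scale changes_append changes_map_inj hd_map)
qed

lemma ex_scale_changes_add_scale:
  assumes F: "infinite (UNIV :: 'a set) \<or> 2 < card (UNIV :: 'a set)"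
    and uw: "support u \<subseteq> {..<M}" "support w \<subseteq> {M..}" "u \<noteq> 0" "w \<noteq> 0"
    and "j \<le> 1"
  shows "\<exists>c. c \<noteq> 0 \<and>
           changes (nz_coeffs (u + c *s w)) = changes (nz_coeffs u) + changes (nz_coeffs w) + j"
proof -
  define a b where "a = last (nz_coeffs u)" and "b = hd (nz_coeffs w)"
  have "a \<in> set (nz_coeffs u)" "b \<in> set (nz_coeffs w)"
    using uw(3,4) by (simp_all add: a_def b_def flip: nz_coeffs_eq_Nil_iff)
  then have "a \<noteq> 0" "b \<noteq> 0" by (auto dest: nz_coeffs_nonzero)
  obtain c where c: "c \<noteq> 0" "of_bool (a \<noteq> c * b) = j"
  proof (cases "j = 1")
    case True
    obtain c where "c \<noteq> 0" "c \<noteq> a / b" using ex_not_in_doubleton[OF F] by blast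
    then show ?thesis using that[of c] True \<open>b \<noteq> 0\<close> by (auto simp: field_simps)
  next
    case False
    then show ?thesis using that[of "a / b"] \<open>a \<noteq> 0\<close> \<open>b \<noteq> 0\<close> \<open>j \<le> 1\<close> by auto
  qed
  then show ?thesis
    using changes_nz_coeffs_add_scale[OF uw(1,2) c(1) uw(3,4)] by (auto simp: a_def b_def)
qed

lemma support_subset_atLeast_iff: "support v \<subseteq> {N..} \<longleftrightarrow> (\<forall>i<N. coeff v i = 0)"
  by (auto simp: support_def not_le[symmetric])

lemma subspace_tail: "subspace V \<Longrightarrow> subspace {v \<in> V. support v \<subseteq> {N..}}"
  unfolding subspace_def support_subset_atLeast_iff by (simp add: coeff_add coeff_scale coeff_zero)

lemma tail_not_finitely_spanned:
  assumes "subspace V" "\<And>T. finite T \<Longrightarrow> \<not> V \<subseteq> span T" "finite T"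
  shows "\<not> {v \<in> V. support v \<subseteq> {N..}} \<subseteq> span T"
  using \<open>finite T\<close>
proof (induction N arbitrary: T)
  case 0
  then show ?case using assms(2) by simp
next
  case (Suc N)
  have "{v \<in> V. support v \<subseteq> {Suc N..}} = {v \<in> {v \<in> V. support v \<subseteq> {N..}}. coeff v N = 0}"
    by (auto simp: support_subset_atLeast_iff less_Suc_eq)
  then show ?case
    using kernel_not_finitely_spanned[where f = "\<lambda>v. coeff v N",
        OF subspace_tail[OF assms(1)] Suc.IH coeff_add coeff_scale Suc.prems]
    by simp
qed

lemma inf_dim_subspace_tail_vector:
  assumes "inf_dim_subspace scale V"
  shows "\<exists>v \<in> V. v \<noteq> 0 \<and> support v \<subseteq> {N..}"
proof -
  obtain C where V: "subspace V" and C: "C \<subseteq> V" "independent C" "infinite C"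
    using assms unfolding inf_dim_subspace_def by auto
  have "\<not> V \<subseteq> span T" if "finite T" for T
    using independent_span_bound[OF that C(2)] C(1,3) by blast
  then have "\<not> {v \<in> V. support v \<subseteq> {N..}} \<subseteq> span {}"
    using tail_not_finitely_spanned[OF V] by blast
  then show ?thesis by (auto simp: span_empty)
qed

lemma ex_support_less: "\<exists>M. N \<le> M \<and> support v \<subseteq> {..<M}"
proof -
  obtain M where "support v \<subseteq> {..<M}"
    using finite_nat_bounded[OF finite_support] by blast
  then show ?thesis by (intro exI[of _ "max N M"]) auto
qed

lemma changes_interval_in_subspace:
  assumes F: "infinite (UNIV :: 'a set) \<or> 2 < card (UNIV :: 'a set)"
    and "subspace V" and tails: "\<And>N. \<exists>v \<in> V. v \<noteq> 0 \<and> support v \<subseteq> {N..}"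
  shows "\<exists>I. \<forall>k \<in> {I..I + r}.
           \<exists>v \<in> V. v \<noteq> 0 \<and> support v \<subseteq> {N..} \<and> changes (nz_coeffs v) = k"
proof (induction r arbitrary: N)
  case 0
  obtain v where "v \<in> V" "v \<noteq> 0" "support v \<subseteq> {N..}" using tails by blast
  then show ?case by (intro exI[of _ "changes (nz_coeffs v)"]) auto
next
  case (Suc r)
  obtain u where u: "u \<in> V" "u \<noteq> 0" "support u \<subseteq> {N..}" using tails by blast
  obtain M where M: "N \<le> M" "support u \<subseteq> {..<M}" using ex_support_less by blast
  obtain I where I: "\<forall>m \<in> {I..I + r}.
      \<exists>w \<in> V. w \<noteq> 0 \<and> support w \<subseteq> {M..} \<and> changes (nz_coeffs w) = m"
    using Suc.IH by blast
  let ?cu = "changes (nz_coeffs u)"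
  show ?case
  proof (intro exI[of _ "?cu + I"] ballI)
    fix k assume k: "k \<in> {?cu + I..?cu + I + Suc r}"
    define m where "m = min (k - ?cu) (I + r)"
    have "m \<in> {I..I + r}" "k - ?cu - m \<le> 1" using k by (auto simp: m_def)
    then obtain w where w: "w \<in> V" "w \<noteq> 0" "support w \<subseteq> {M..}" "changes (nz_coeffs w) = m"
      using I by blast
    obtain c where c: "c \<noteq> 0"
        "changes (nz_coeffs (u + c *s w)) = ?cu + changes (nz_coeffs w) + (k - ?cu - m)"
      using ex_scale_changes_add_scale[OF F M(2) w(3) u(2) w(2) \<open>k - ?cu - m \<le> 1\<close>] by blast
    have "u + c *s w \<in> V"
      using \<open>subspace V\<close> u(1) w(1) by (simp add: subspace_add subspace_scale)
    moreover have "u + c *s w \<noteq> 0"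
      using nz_coeffs_add_scale[OF M(2) w(3) c(1)] u(2) by (simp flip: nz_coeffs_eq_Nil_iff)
    moreover have "support (u + c *s w) \<subseteq> {N..}"
      using support_add_scale u(3) w(3) M(1) by fastforce
    moreover have "changes (nz_coeffs (u + c *s w)) = k"
      using c(2) w(4) k by (auto simp: m_def)
    ultimately show "\<exists>v \<in> V. v \<noteq> 0 \<and> support v \<subseteq> {N..} \<and> changes (nz_coeffs v) = k"
      by blast
  qed
qed

lemma asymptotic_multiplicity_changes:
  assumes "infinite (UNIV :: 'a set) \<or> 2 < card (UNIV :: 'a set)"
  shows "asymptotic scale {v. v \<noteq> 0 \<and> multiplicity 2 (Suc (changes (nz_coeffs v))) = n}"
  unfolding asymptotic_def
proof (intro conjI allI impI)
  fix V assume V: "inf_dim_subspace scale V"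
  then have "subspace V" by (simp add: inf_dim_subspace_def)
  obtain I where I: "\<forall>k \<in> {I..I + 4 * 2^n}.
      \<exists>v \<in> V. v \<noteq> 0 \<and> support v \<subseteq> {0..} \<and> changes (nz_coeffs v) = k"
    using changes_interval_in_subspace[where r = "4 * 2^n" and N = 0,
        OF assms \<open>subspace V\<close> inf_dim_subspace_tail_vector[OF V]]
    by blast
  obtain k where k: "k \<in> {I..I + 4 * 2^n}" "multiplicity 2 (Suc k) = n"
    using ex_multiplicity_two_in_interval by blast
  then obtain v where "v \<in> V" "v \<noteq> 0" "changes (nz_coeffs v) = k"
    using I by blast
  then show "V \<inter> {v. v \<noteq> 0 \<and> multiplicity 2 (Suc (changes (nz_coeffs v))) = n} \<noteq> {}"
    using k(2) by auto
qed auto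

end

theorem lemma8p4:
  fixes scale :: "'a::field \<Rightarrow> 'v::ab_group_add \<Rightarrow> 'v"
  assumes "vector_space scale"
    and "countable (UNIV :: 'a set)"
    and "infinite (UNIV :: 'a set) \<or> card (UNIV :: 'a set) > 2"
    and "\<exists>B. \<not> module.dependent scale B \<and> module.span scale B = UNIV \<and> countable B \<and> infinite B"
  shows "\<exists>A :: nat \<Rightarrow> 'v set. (\<forall>n. asymptotic scale (A n)) \<and>
           (\<forall>m n. m \<noteq> n \<longrightarrow> A m \<inter> A n = {})"
proof -
  obtain B where B: "\<not> module.dependent scale B" "module.span scale B = UNIV"
      "countable B" "infinite B"
    using assms(4) by blast
  interpret vector_space scale by (fact assms(1))
  interpret enumerated_basis scale "from_nat_into B"
    using B bij_betw_from_nat_into[OF B(3,4)] infinite_imp_nonempty[OF B(4)]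
    by unfold_locales (auto simp: bij_betw_def)
  let ?A = "\<lambda>n. {v. v \<noteq> 0 \<and> multiplicity 2 (Suc (changes (nz_coeffs v))) = n}"
  have "asymptotic scale (?A n)" for n
    using asymptotic_multiplicity_changes assms(3) by simp
  moreover have "?A m \<inter> ?A n = {}" if "m \<noteq> n" for m n
    using that by auto
  ultimately show ?thesis by (intro exI[of _ ?A]) blast
qed

end
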